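(* Let $f_0=1,f_1=1,f_2=2,\dots$ be the Fibonacci numbers, let $L$ be a positive integer, and set $p=f_L$, $q=f_{L+1}$. There are absolute constants $c_1,c_2>0$ such that for all integers $v\neq v'$ with $v,v'\in(-c_2q,c_2q)$ we have $\rho_q(pv,pv')>\frac{c_1q}{\max\{|v|,|v'|\}}$. Furthermore, for any $i\in[q]$ and any $t\le L$, there is $v\in\{-f_t,\dots,f_t\}$ such that $\rho_q(i,pv)\le\frac{3q}{f_t}$.
   Context: $\rho_q$ is the Lee metric on $\mathbb{Z}_q$: $\rho_q(a,b)$ is the minimum of $|j|$ over all integers $j$ with $a\equiv b+j\pmod q$. *)

theory Defs
  imports Complex_Main "HOL-Number_Theory.Number_Theory"
begin

text \<open>Fibonacci numbers with the paper's indexing f_0 = 1, f_1 = 1, f_2 = 2, ...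
  In terms of the library's fib (fib 0 = 0, fib 1 = 1): f n = fib (n+1).\<close>
definition fibo :: "nat \<Rightarrow> nat" where
  "fibo n = fib (Suc n)"

definition lee :: "int \<Rightarrow> int \<Rightarrow> int \<Rightarrow> nat" where
  "lee q a b = (LEAST n::nat. \<exists>j::int. \<bar>j\<bar> = int n \<and> [a = b + j] (mod q))"

end

theory Submission
  imports Defs
begin

(* With p = F(L+1) and q = F(L+2) in the library's indexing, Cassini's identity gives
   q^2 - q p - p^2 = +-1.
   Separation: if p d = j (mod q), say j = p d - q k, then
   q^2 (d^2 - d k - k^2) = +-d^2 + d j (q + 2 p) - j^2, and the form d^2 - d k - k^2 has no
   integer zero other than d = k = 0 (2-adic descent). Hence q^2 <= d^2 + 3 q |d j| + j^2,
   which for 2 |d| < q forces |j| > q / (6 |d|).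
   Covering: by d'Ocagne's identity the lattice {(v, w). w = p v (mod q)} contains
   (F(k+2), +-F(m+1)) and (F(k+1), +-F(m+2)) where L = m + k + 1. Rounding (0, i) to the
   lattice they span gives |v| <= F(k+2) and a Lee distance of at most F(m+3)/2 <= q / F(k+2). *)

lemma lee_attained:
  obtains j :: int where "\<bar>j\<bar> = int (lee q a b)" and "[a = b + j] (mod q)"
proof -
  have "\<exists>n::nat. \<exists>j::int. \<bar>j\<bar> = int n \<and> [a = b + j] (mod q)"
    by (intro exI[of _ "nat \<bar>a - b\<bar>"] exI[of _ "a - b"]) auto
  then have "\<exists>j::int. \<bar>j\<bar> = int (lee q a b) \<and> [a = b + j] (mod q)"
    unfolding lee_def by (rule LeastI_ex)
  then show thesis using that by blast
qed

lemma lee_le_abs: "[a = b + j] (mod q) \<Longrightarrow> lee q a b \<le> nat \<bar>j\<bar>"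
  unfolding lee_def by (rule Least_le) auto

lemma golden_form_eq_0_imp_eq_0:
  fixes d k :: int
  assumes "d^2 - d*k - k^2 = 0"
  shows "d = 0"
  using assms
proof (induction "nat \<bar>d\<bar>" arbitrary: d k rule: less_induct)
  case less
  have "even (d^2 - d*k - k^2)" using less.prems by simp
  then have "even d \<and> even k" by (cases "even d"; cases "even k") (auto simp: even_mult_iff)
  then obtain d' k' where dk: "d = 2*d'" "k = 2*k'" by (auto elim!: evenE)
  have "4 * (d'^2 - d'*k' - k'^2) = 0"
    using less.prems unfolding dk by (simp add: algebra_simps power2_eq_square)
  then have "d'^2 - d'*k' - k'^2 = 0" by simp
  moreover have "nat \<bar>d'\<bar> < nat \<bar>d\<bar>" if "d \<noteq> 0" using that dk(1) by arith
  ultimately show "d = 0" using less.hyps dk(1) by fastforce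
qed

lemma golden_pair_residue_quadratic_bound:
  fixes p q d j :: int
  assumes pair: "\<bar>q^2 - q*p - p^2\<bar> = 1" and "0 \<le> p" "p \<le> q" "d \<noteq> 0"
    and cong: "[p*d = j] (mod q)"
  shows "q^2 \<le> d^2 + 3*q*(\<bar>d\<bar>*\<bar>j\<bar>) + j^2"
proof -
  obtain k where k: "j = p*d - q*k"
    using cong by (metis cong_iff_dvd_diff cong_sym dvdE add_diff_cancel_left' diff_diff_eq2)
  define N where "N = d^2 - d*k - k^2"
  have "N \<noteq> 0" using golden_form_eq_0_imp_eq_0 \<open>d \<noteq> 0\<close> unfolding N_def by blast
  have iden: "q^2 * N = (q^2 - q*p - p^2) * d^2 + d*j*(q + 2*p) - j^2"
    unfolding N_def k by (simp add: algebra_simps power2_eq_square)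
  have "1 \<le> \<bar>N\<bar>" using \<open>N \<noteq> 0\<close> by arith
  then have "q^2 \<le> \<bar>q^2 * N\<bar>" by (simp add: abs_mult mult_le_cancel_left1)
  also have "\<dots> \<le> \<bar>(q^2 - q*p - p^2) * d^2\<bar> + \<bar>d*j*(q + 2*p)\<bar> + \<bar>j^2\<bar>"
    unfolding iden by linarith
  also have "\<dots> = d^2 + \<bar>d\<bar>*\<bar>j\<bar>*(q + 2*p) + j^2"
    using pair \<open>0 \<le> p\<close> \<open>p \<le> q\<close> by (simp add: abs_mult)
  also have "\<dots> \<le> d^2 + \<bar>d\<bar>*\<bar>j\<bar>*(3*q) + j^2"
    using \<open>p \<le> q\<close> by (simp add: mult_left_mono)
  finally show ?thesis by (simp add: algebra_simps)
qed

lemma golden_pair_residue_lower_bound: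
  fixes p q d j :: int
  assumes "\<bar>q^2 - q*p - p^2\<bar> = 1" "0 \<le> p" "p \<le> q" "d \<noteq> 0" "2*\<bar>d\<bar> < q"
    and "[p*d = j] (mod q)"
  shows "q < 6*\<bar>d\<bar>*\<bar>j\<bar>"
proof (cases "q \<le> 2*\<bar>j\<bar>")
  case True
  have "1 \<le> \<bar>d\<bar>" using \<open>d \<noteq> 0\<close> by arith
  then have "\<bar>j\<bar> \<le> \<bar>d\<bar>*\<bar>j\<bar>" by (simp add: mult_le_cancel_right1)
  then show ?thesis using True \<open>2*\<bar>d\<bar> < q\<close> by linarith
next
  case False
  have "(2*\<bar>j\<bar>)^2 < q^2" by (rule power_strict_mono) (use False in auto)
  moreover have "(2*\<bar>d\<bar>)^2 < q^2" by (rule power_strict_mono) (use \<open>2*\<bar>d\<bar> < q\<close> in auto)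
  ultimately have "q*q < q*(6*(\<bar>d\<bar>*\<bar>j\<bar>))"
    using golden_pair_residue_quadratic_bound[OF assms(1-4,6)]
    by (simp add: power2_eq_square algebra_simps)
  moreover have "0 < q" using \<open>2*\<bar>d\<bar> < q\<close> by linarith
  ultimately show ?thesis by (simp add: mult_less_cancel_left mult.assoc)
qed

lemma fib_golden_pair:
  "\<bar>int (fib (n+2))^2 - int (fib (n+2)) * int (fib (n+1)) - int (fib (n+1))^2\<bar> = 1"
proof -
  have "int (fib (n+2)) * int (fib n) - int (fib (n+1))^2 = - ((-1)^n)"
    using fib_Cassini_int[of n] by simp
  moreover have "fib (n+2) = fib (n+1) + fib n" by (rule fib_plus_2)
  ultimately have "int (fib (n+2))^2 - int (fib (n+2)) * int (fib (n+1)) - int (fib (n+1))^2 = - ((-1)^n)"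
    by (simp add: algebra_simps power2_eq_square)
  then show ?thesis by simp
qed

lemma fibo_lee_separation:
  fixes L :: nat and v v' :: int
  assumes "v \<noteq> v'" "\<bar>real_of_int v\<bar> < 1/4 * real (fibo (L+1))"
    "\<bar>real_of_int v'\<bar> < 1/4 * real (fibo (L+1))"
  shows "real (lee (int (fibo (L+1))) (int (fibo L) * v) (int (fibo L) * v'))
    > 1/12 * real (fibo (L+1)) / real_of_int (max \<bar>v\<bar> \<bar>v'\<bar>)"
proof -
  define p q where "p = int (fibo L)" and "q = int (fibo (L+1))"
  define M where "M = max \<bar>v\<bar> \<bar>v'\<bar>"
  have pair: "\<bar>q^2 - q*p - p^2\<bar> = 1"
    using fib_golden_pair[of L] unfolding p_def q_def fibo_def by simp
  have "p \<le> q" unfolding p_def q_def fibo_def by (simp add: fib_mono)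
  obtain j where j: "\<bar>j\<bar> = int (lee q (p*v) (p*v'))" "[p*v = p*v' + j] (mod q)"
    using lee_attained by blast
  have "[p*(v - v') = j] (mod q)"
    using j(2) by (simp add: cong_iff_dvd_diff right_diff_distrib algebra_simps)
  moreover have "2*\<bar>v - v'\<bar> < q"
  proof -
    have "real_of_int (4*\<bar>v\<bar>) < q" "real_of_int (4*\<bar>v'\<bar>) < q"
      using assms(2,3) unfolding q_def by simp_all
    then have "4*\<bar>v\<bar> < q" "4*\<bar>v'\<bar> < q" by (simp_all only: of_int_less_iff)
    then show ?thesis using abs_triangle_ineq4[of v v'] by simp
  qed
  ultimately have "q < 6*\<bar>v - v'\<bar>*\<bar>j\<bar>"
    using golden_pair_residue_lower_bound[OF pair _ \<open>p \<le> q\<close>] assms(1) p_def by simp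
  also have "\<dots> \<le> 12*M*\<bar>j\<bar>" unfolding M_def by (intro mult_right_mono) auto
  finally have "real_of_int q < real_of_int (12*M*\<bar>j\<bar>)" by (simp only: of_int_less_iff)
  moreover have "0 < M" unfolding M_def using assms(1) by linarith
  ultimately show ?thesis using j(1) unfolding p_def q_def M_def by (simp add: field_simps)
qed

lemma abs_combination_le:
  fixes x y a b :: real
  assumes "\<bar>x\<bar> \<le> 1/2" "\<bar>y\<bar> \<le> 1/2"
  shows "\<bar>x*a + y*b\<bar> \<le> (\<bar>a\<bar> + \<bar>b\<bar>) / 2"
proof -
  have "\<bar>x*a + y*b\<bar> \<le> \<bar>x\<bar>*\<bar>a\<bar> + \<bar>y\<bar>*\<bar>b\<bar>"
    using abs_triangle_ineq[of "x*a" "y*b"] by (simp add: abs_mult)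
  also have "\<dots> \<le> 1/2*\<bar>a\<bar> + 1/2*\<bar>b\<bar>"
    using assms by (intro add_mono mult_right_mono) auto
  finally show ?thesis by simp
qed

lemma lattice_rounding:
  fixes A1 A2 B1 B2 :: int and s t :: real
  assumes "A1*B2 - A2*B1 \<noteq> 0"
  obtains X Y :: int
  where "\<bar>real_of_int (X*A1 + Y*B1) - s\<bar> \<le> real_of_int (\<bar>A1\<bar> + \<bar>B1\<bar>) / 2"
    and "\<bar>real_of_int (X*A2 + Y*B2) - t\<bar> \<le> real_of_int (\<bar>A2\<bar> + \<bar>B2\<bar>) / 2"
proof -
  define D where "D = real_of_int (A1*B2 - A2*B1)"
  have "D \<noteq> 0" unfolding D_def using assms by (metis of_int_eq_0_iff)
  define x y where "x = (s*B2 - t*B1) / D" and "y = (t*A1 - s*A2) / D"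
  have "x*A1 + y*B1 = s*D/D" "x*A2 + y*B2 = t*D/D"
    unfolding x_def y_def D_def by (simp_all add: add_divide_distrib[symmetric] algebra_simps)
  then have "x*A1 + y*B1 = s" "x*A2 + y*B2 = t" using \<open>D \<noteq> 0\<close> by simp_all
  then have "real_of_int (round x * A1 + round y * B1) - s = (round x - x)*A1 + (round y - y)*B1"
    "real_of_int (round x * A2 + round y * B2) - t = (round x - x)*A2 + (round y - y)*B2"
    by (simp_all add: algebra_simps)
  then show thesis
    using that[of "round x" "round y"] abs_combination_le of_int_round_abs_le[of x] of_int_round_abs_le[of y]
    by simp
qed

(* (a, p a - q b) and (b, p b - q c) span a full-rank sublattice of {(v, w). w = p v (mod q)}. *)
lemma lee_covering_by_basis:
  fixes p q a b c i :: int
  assumes "q \<noteq> 0" "b^2 \<noteq> a*c"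
  obtains v where "real_of_int \<bar>v\<bar> \<le> real_of_int (\<bar>a\<bar> + \<bar>b\<bar>) / 2"
    and "real (lee q i (p*v)) \<le> real_of_int (\<bar>p*a - q*b\<bar> + \<bar>p*b - q*c\<bar>) / 2"
proof -
  have "a*(p*b - q*c) - (p*a - q*b)*b = q*(b^2 - a*c)" by (simp add: algebra_simps power2_eq_square)
  then have "a*(p*b - q*c) - (p*a - q*b)*b \<noteq> 0" using assms by simp
  then obtain X Y where XY:
    "\<bar>real_of_int (X*a + Y*b) - 0\<bar> \<le> real_of_int (\<bar>a\<bar> + \<bar>b\<bar>) / 2"
    "\<bar>real_of_int (X*(p*a - q*b) + Y*(p*b - q*c)) - i\<bar>
       \<le> real_of_int (\<bar>p*a - q*b\<bar> + \<bar>p*b - q*c\<bar>) / 2"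
    by (rule lattice_rounding)
  define v w where "v = X*a + Y*b" and "w = X*(p*a - q*b) + Y*(p*b - q*c)"
  have "[i = p*v + (i - w)] (mod q)"
    unfolding cong_iff_dvd_diff v_def w_def by (simp add: algebra_simps)
  then have "lee q i (p*v) \<le> nat \<bar>i - w\<bar>" by (rule lee_le_abs)
  then have "real (lee q i (p*v)) \<le> \<bar>real_of_int w - i\<bar>" by linarith
  then show thesis using that[of v] XY unfolding v_def w_def by simp
qed

lemma fib_d_Ocagne_int:
  "int (fib (m + k)) * int (fib (k + 1)) - int (fib (m + k + 1)) * int (fib k) = (-1)^k * int (fib m)"
proof (induction k)
  case 0
  then show ?case by simp
next
  case (Suc k)
  have "fib (m + k + 2) = fib (m + k + 1) + fib (m + k)" "fib (k + 2) = fib (k + 1) + fib k"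
    by (simp_all add: fib_plus_2)
  then show ?case using Suc.IH by (simp add: algebra_simps)
qed

lemma fib_mult_le_double: "fib (Suc (Suc m)) * fib (Suc n) \<le> 2 * fib (Suc (m + n))"
proof -
  have "fib (Suc (Suc m)) * fib (Suc n) \<le> fib (Suc (Suc m + n))" using fib_add[of "Suc m" n] by simp
  also have "\<dots> = fib (Suc (m + n)) + fib (m + n)" by simp
  also have "\<dots> \<le> 2 * fib (Suc (m + n))" using fib_Suc_mono[of "m + n"] by simp
  finally show ?thesis .
qed

lemma fib_lee_covering:
  fixes m k :: nat and i :: int
  obtains v where "\<bar>v\<bar> \<le> int (fib (k+2))"
    and "real (lee (int (fib (m+k+3))) i (int (fib (m+k+2)) * v)) \<le> real (fib (m+3)) / 2"
proof -
  define p q a b c where "p = int (fib (m+k+2))" and "q = int (fib (m+k+3))"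
    and "a = int (fib (k+2))" and "b = int (fib (k+1))" and "c = int (fib k)"
  have "q \<noteq> 0" unfolding q_def using fib_neq_0_nat[of "m+k+3"] by simp
  moreover have "b^2 \<noteq> a*c"
    using fib_Cassini_int[of k] unfolding a_def b_def c_def by (auto simp: algebra_simps)
  ultimately obtain v where
    v: "real_of_int \<bar>v\<bar> \<le> real_of_int (\<bar>a\<bar> + \<bar>b\<bar>) / 2" and
    lee_v: "real (lee q i (p*v)) \<le> real_of_int (\<bar>p*a - q*b\<bar> + \<bar>p*b - q*c\<bar>) / 2"
    by (rule lee_covering_by_basis)
  have "b \<le> a" unfolding a_def b_def by (simp add: fib_mono)
  then have "\<bar>v\<bar> \<le> a" using v unfolding b_def by simp
  have idx: "m + 1 + (k + 1) = m + k + 2" "m + 2 + k = m + k + 2" "m + k + 2 + 1 = m + k + 3"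
    "k + 1 + 1 = k + 2" by simp_all
  have "p*a - q*b = (-1)^(k+1) * int (fib (m+1))" "p*b - q*c = (-1)^k * int (fib (m+2))"
    using fib_d_Ocagne_int[of "m+1" "k+1"] fib_d_Ocagne_int[of "m+2" k]
    unfolding p_def q_def a_def b_def c_def by (simp_all only: idx)
  then have "real (lee q i (p*v)) \<le> real (fib (m+1) + fib (m+2)) / 2"
    using lee_v by (simp add: abs_mult)
  also have "fib (m+1) + fib (m+2) = fib (m+3)" by (simp add: numeral_eq_Suc)
  finally show thesis using that \<open>\<bar>v\<bar> \<le> a\<close> unfolding p_def q_def a_def by blast
qed

lemma fibo_lee_covering:
  fixes L t :: nat and i :: int
  assumes "t \<le> L" "i \<in> {1..int (fibo (L+1))}"
  shows "\<exists>v. v \<in> {- int (fibo t)..int (fibo t)} \<and>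
    real (lee (int (fibo (L+1))) i (int (fibo L) * v)) \<le> 3 * real (fibo (L+1)) / real (fibo t)"
proof (cases t)
  case 0
  have "[i = int (fibo L) * 0 + i] (mod int (fibo (L+1)))" by simp
  then have "lee (int (fibo (L+1))) i (int (fibo L) * 0) \<le> nat \<bar>i\<bar>" by (rule lee_le_abs)
  moreover have "nat \<bar>i\<bar> \<le> fibo (L+1)" using assms(2) by auto
  ultimately have "lee (int (fibo (L+1))) i (int (fibo L) * 0) \<le> fibo (L+1)" by (rule order_trans)
  then have "real (lee (int (fibo (L+1))) i (int (fibo L) * 0)) \<le> real (fibo (L+1))"
    by (simp only: of_nat_le_iff)
  moreover have "fibo t = 1" unfolding 0 fibo_def by simp
  ultimately show ?thesis by (intro exI[of _ 0]) simp
next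
  case (Suc k)
  define m where "m = L - t"
  have L: "L = m + k + 1" using assms(1) Suc m_def by simp
  have fibo: "fibo t = fib (k+2)" "fibo L = fib (m+k+2)" "fibo (L+1) = fib (m+k+3)"
    unfolding fibo_def Suc L by (simp_all add: numeral_eq_Suc)
  obtain v where v: "\<bar>v\<bar> \<le> int (fib (k+2))"
    and lee_v: "real (lee (int (fib (m+k+3))) i (int (fib (m+k+2)) * v)) \<le> real (fib (m+3)) / 2"
    by (rule fib_lee_covering)
  have "real (fib (m+3)) / 2 \<le> 3 * real (fib (m+k+3)) / real (fib (k+2))"
  proof -
    define x y z where "x = real (fib (m+3))" and "y = real (fib (k+2))" and "z = real (fib (m+k+3))"
    have "fib (m+3) * fib (k+2) \<le> 2 * fib (m+k+3)"
      using fib_mult_le_double[of "m+1" "k+1"] by (simp add: numeral_eq_Suc)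
    then have "x * y \<le> 2 * z" unfolding x_def y_def z_def
      by (metis of_nat_le_iff of_nat_mult of_nat_numeral)
    moreover have "0 < y" unfolding y_def using fib_neq_0_nat[of "k+2"] by (simp only: of_nat_0_less_iff)
    moreover have "0 \<le> z" unfolding z_def by simp
    ultimately have "x / 2 \<le> 3 * z / y" by (simp add: field_simps)
    then show ?thesis unfolding x_def y_def z_def .
  qed
  then have "real (lee (int (fib (m+k+3))) i (int (fib (m+k+2)) * v))
      \<le> 3 * real (fib (m+k+3)) / real (fib (k+2))"
    using lee_v by (rule order_trans[rotated])
  moreover have "v \<in> {- int (fib (k+2))..int (fib (k+2))}" using v by auto
  ultimately show ?thesis unfolding fibo by blast
qed

theorem lemma56:
  shows "\<exists>c1 c2 :: real. c1 > 0 \<and> c2 > 0 \<and>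
    (\<forall>L::nat. L \<ge> 1 \<longrightarrow>
      (\<forall>v v' :: int. v \<noteq> v' \<and>
          \<bar>real_of_int v\<bar> < c2 * real (fibo (L+1)) \<and>
          \<bar>real_of_int v'\<bar> < c2 * real (fibo (L+1)) \<longrightarrow>
          real (lee (int (fibo (L+1))) (int (fibo L) * v) (int (fibo L) * v'))
            > c1 * real (fibo (L+1)) / real_of_int (max \<bar>v\<bar> \<bar>v'\<bar>)))
    \<and> (\<forall>L::nat. L \<ge> 1 \<longrightarrow>
      (\<forall>(i::int) (t::nat). i \<in> {1..int (fibo (L+1))} \<and> t \<le> L \<longrightarrow>
        (\<exists>v::int. v \<in> {- int (fibo t)..int (fibo t)} \<and>
          real (lee (int (fibo (L+1))) i (int (fibo L) * v))
            \<le> 3 * real (fibo (L+1)) / real (fibo t))))"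
  using fibo_lee_separation fibo_lee_covering
  by (intro exI[of _ "1/12"] exI[of _ "1/4"]) auto

end
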